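(* For every $\sigma\in\mathcal{SC}$, $\sigma\sim\mathrm{mcl}(\sigma)$.
   Context: Contract terms over base types $BT$ and labels $\mathcal L$: $\sigma::=\mathbf 1\mid ?\mathtt t.\sigma\mid !\mathtt t.\sigma\mid !(\sigma).\sigma\mid ?(\sigma).\sigma\mid \sum_{i\in I}?l_i.\sigma_i\mid \bigoplus_{i\in I}!l_i.\sigma_i\mid \mu x.\sigma\mid x$ ($I$ finite nonempty, labels distinct). $\mathcal{SC}$ = closed guarded terms. Actions $\mathsf{Act}=\{?l,!l\}\cup\{?\mathtt t,!\mathtt t\}\cup\{?(\sigma),!(\sigma):\sigma\in\mathcal{SC}\}$. LTS: $\mathbf 1\xrightarrow\checkmark$; $\lambda.\sigma\xrightarrow\lambda\sigma$ for prefixes (including $!l.\sigma$); $\bigoplus_{i\in I}!l_i.\sigma_i\xrightarrow\tau!l_i.\sigma_i$ for $|I|>1$; $\sum ?l_i.\sigma_i\xrightarrow{?l_i}\sigma_i$; $\mu x.\sigma\xrightarrow\tau\sigma[\mu x.\sigma/x]$. Strong bisimilarity $\sim$: largest $R$ such that $\sigma_1R\sigma_2$ implies $\sigma_1\xrightarrow\checkmark$ iff $\sigma_2\xrightarrow\checkmark$, and for each $\mu\in\mathsf{Act}\cup\{\tau\}$ every $\sigma_1\xrightarrow\mu\sigma_1'$ is matched by some $\sigma_2\xrightarrow\mu\sigma_2'$ with $\sigma_1'R\sigma_2'$ and vice versa. A substitution $s$ is a finite partial map from variables to $\mathcal{SC}$, applied to free occurrences. $\mathrm{mclo}(\sigma,s)$: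 $\mathbf 1\mapsto\mathbf 1$; $x\mapsto x$; $!(\sigma^m).\sigma'\mapsto!(\sigma^m s).\mathrm{mclo}(\sigma',s)$; $?(\sigma^m).\sigma'\mapsto?(\sigma^m s).\mathrm{mclo}(\sigma',s)$; base-type prefixes and sums are mapped componentwise (keeping prefixes); $\mu x.\sigma'\mapsto\mu x.\mathrm{mclo}(\sigma',s')$ where $s'$ maps $x$ to $(\mu x.\sigma')s$ and agrees with $s$ elsewhere. $\mathrm{mcl}(\sigma)=\mathrm{mclo}(\sigma,\varepsilon)$ with $\varepsilon$ the empty substitution. *)

theory Defs
  imports Main
begin

(* Session contract terms.  'b = base types BT, 'l = labels, 'v = recursion variables.
   Sums / internal choices are lists of (label, continuation) pairs; well-formedness
   (nonempty, distinct labels) is part of the predicate SC below. *)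
datatype ('b, 'l, 'v) sterm =
    End
  | InT 'b "('b, 'l, 'v) sterm"
  | OutT 'b "('b, 'l, 'v) sterm"
  | OutS "('b, 'l, 'v) sterm" "('b, 'l, 'v) sterm"
  | InS "('b, 'l, 'v) sterm" "('b, 'l, 'v) sterm"
  | Branch "('l \<times> ('b, 'l, 'v) sterm) list"
  | Choice "('l \<times> ('b, 'l, 'v) sterm) list"
  | Mu 'v "('b, 'l, 'v) sterm"
  | Var 'v

primrec fv :: "('b, 'l, 'v) sterm \<Rightarrow> 'v set" where
  "fv End = {}"
| "fv (InT t s) = fv s"
| "fv (OutT t s) = fv s"
| "fv (OutS m s) = fv m \<union> fv s"
| "fv (InS m s) = fv m \<union> fv s"
| "fv (Branch bs) = \<Union> (snd ` set (map (map_prod id fv) bs))"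
| "fv (Choice bs) = \<Union> (snd ` set (map (map_prod id fv) bs))"
| "fv (Mu x s) = fv s - {x}"
| "fv (Var x) = {x}"

(* guarded_in x s: every free occurrence of x in s lies under a prefix *)
primrec guarded_in :: "'v \<Rightarrow> ('b, 'l, 'v) sterm \<Rightarrow> bool" where
  "guarded_in x End = True"
| "guarded_in x (InT t s) = True"
| "guarded_in x (OutT t s) = True"
| "guarded_in x (OutS m s) = True"
| "guarded_in x (InS m s) = True"
| "guarded_in x (Branch bs) = True"
| "guarded_in x (Choice bs) = True"
| "guarded_in x (Mu y s) = (y = x \<or> guarded_in x s)"
| "guarded_in x (Var y) = (y \<noteq> x)"

primrec guarded :: "('b, 'l, 'v) sterm \<Rightarrow> bool" where
  "guarded End = True"
| "guarded (InT t s) = guarded s"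
| "guarded (OutT t s) = guarded s"
| "guarded (OutS m s) = (guarded m \<and> guarded s)"
| "guarded (InS m s) = (guarded m \<and> guarded s)"
| "guarded (Branch bs) = (\<forall>p\<in>set (map (map_prod id guarded) bs). snd p)"
| "guarded (Choice bs) = (\<forall>p\<in>set (map (map_prod id guarded) bs). snd p)"
| "guarded (Mu x s) = (guarded_in x s \<and> guarded s)"
| "guarded (Var x) = True"

primrec wf :: "('b, 'l, 'v) sterm \<Rightarrow> bool" where
  "wf End = True"
| "wf (InT t s) = wf s"
| "wf (OutT t s) = wf s"
| "wf (OutS m s) = (wf m \<and> wf s)"
| "wf (InS m s) = (wf m \<and> wf s)"
| "wf (Branch bs) = (bs \<noteq> [] \<and> distinct (map fst bs) \<and> (\<forall>p\<in>set (map (map_prod id wf) bs). snd p))"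
| "wf (Choice bs) = (bs \<noteq> [] \<and> distinct (map fst bs) \<and> (\<forall>p\<in>set (map (map_prod id wf) bs). snd p))"
| "wf (Mu x s) = wf s"
| "wf (Var x) = True"

definition SC :: "('b, 'l, 'v) sterm set" where
  "SC = {s. wf s \<and> fv s = {} \<and> guarded s}"

type_synonym ('b, 'l, 'v) subst = "'v \<rightharpoonup> ('b, 'l, 'v) sterm"

primrec apply_subst :: "('b, 'l, 'v) sterm \<Rightarrow> ('b, 'l, 'v) subst \<Rightarrow> ('b, 'l, 'v) sterm" where
  "apply_subst End s = End"
| "apply_subst (InT t u) s = InT t (apply_subst u s)"
| "apply_subst (OutT t u) s = OutT t (apply_subst u s)"
| "apply_subst (OutS m u) s = OutS (apply_subst m s) (apply_subst u s)"
| "apply_subst (InS m u) s = InS (apply_subst m s) (apply_subst u s)"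
| "apply_subst (Branch bs) s = Branch (map (map_prod id (\<lambda>u. apply_subst u s)) bs)"
| "apply_subst (Choice bs) s = Choice (map (map_prod id (\<lambda>u. apply_subst u s)) bs)"
| "apply_subst (Mu x u) s = Mu x (apply_subst u (s(x := None)))"
| "apply_subst (Var x) s = (case s x of Some v \<Rightarrow> v | None \<Rightarrow> Var x)"

primrec mclo :: "('b, 'l, 'v) sterm \<Rightarrow> ('b, 'l, 'v) subst \<Rightarrow> ('b, 'l, 'v) sterm" where
  "mclo End s = End"
| "mclo (InT t u) s = InT t (mclo u s)"
| "mclo (OutT t u) s = OutT t (mclo u s)"
| "mclo (OutS m u) s = OutS (apply_subst m s) (mclo u s)"
| "mclo (InS m u) s = InS (apply_subst m s) (mclo u s)"
| "mclo (Branch bs) s = Branch (map (map_prod id (\<lambda>u. mclo u s)) bs)"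
| "mclo (Choice bs) s = Choice (map (map_prod id (\<lambda>u. mclo u s)) bs)"
| "mclo (Mu x u) s = Mu x (mclo u (s(x \<mapsto> apply_subst (Mu x u) s)))"
| "mclo (Var x) s = Var x"

definition mcl :: "('b, 'l, 'v) sterm \<Rightarrow> ('b, 'l, 'v) sterm" where
  "mcl u = mclo u Map.empty"

datatype ('b, 'l, 'v) lab =
    InL 'l | OutL 'l | InTy 'b | OutTy 'b
  | InM "('b, 'l, 'v) sterm" | OutM "('b, 'l, 'v) sterm"
  | Tau | Tick

fun act_or_tau :: "('b, 'l, 'v) lab \<Rightarrow> bool" where
  "act_or_tau (InM m) = (m \<in> SC)"
| "act_or_tau (OutM m) = (m \<in> SC)"
| "act_or_tau Tick = False"
| "act_or_tau _ = True"

inductive step :: "('b, 'l, 'v) sterm \<Rightarrow> ('b, 'l, 'v) lab \<Rightarrow> ('b, 'l, 'v) sterm \<Rightarrow> bool" where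
  st_end: "step End Tick End"
| st_inT: "step (InT t u) (InTy t) u"
| st_outT: "step (OutT t u) (OutTy t) u"
| st_outS: "step (OutS m u) (OutM m) u"
| st_inS: "step (InS m u) (InM m) u"
| st_outL: "step (Choice [(l, u)]) (OutL l) u"
| st_int: "\<lbrakk>length bs > 1; (l, u) \<in> set bs\<rbrakk> \<Longrightarrow> step (Choice bs) Tau (Choice [(l, u)])"
| st_ext: "(l, u) \<in> set bs \<Longrightarrow> step (Branch bs) (InL l) u"
| st_mu: "step (Mu x u) Tau (apply_subst u [x \<mapsto> Mu x u])"

definition is_bisim :: "(('b, 'l, 'v) sterm \<Rightarrow> ('b, 'l, 'v) sterm \<Rightarrow> bool) \<Rightarrow> bool" where
  "is_bisim R \<longleftrightarrow> (\<forall>s1 s2. R s1 s2 \<longrightarrow>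
      ((\<exists>s1'. step s1 Tick s1') \<longleftrightarrow> (\<exists>s2'. step s2 Tick s2')) \<and>
      (\<forall>a s1'. act_or_tau a \<longrightarrow> step s1 a s1' \<longrightarrow> (\<exists>s2'. step s2 a s2' \<and> R s1' s2')) \<and>
      (\<forall>a s2'. act_or_tau a \<longrightarrow> step s2 a s2' \<longrightarrow> (\<exists>s1'. step s1 a s1' \<and> R s1' s2')))"

definition bisimilar :: "('b, 'l, 'v) sterm \<Rightarrow> ('b, 'l, 'v) sterm \<Rightarrow> bool" (infix "\<sim>\<^sub>b" 50) where
  "s1 \<sim>\<^sub>b s2 \<longleftrightarrow> (\<exists>R. is_bisim R \<and> R s1 s2)"

end

theory Submission
  imports Defs
begin

text \<open>
  Relate \<open>t\<cdot>sL\<close> to \<open>(mclo t sL)\<cdot>sR\<close> whenever the substitutions \<open>sL\<close>, \<open>sR\<close> close \<open>t\<close> and map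
  each free variable of \<open>t\<close> to an already related pair. Both sides then perform the same
  steps into related terms: a \<open>\<mu>x\<close>-unfolding on either side amounts to extending the
  substitutions by \<open>x\<close> mapped to the current pair, which is related itself, and message
  payloads agree because \<open>mclo\<close> has already closed them with \<open>sL\<close>. A free variable
  reduces to the pair it is mapped to; defining the relation inductively makes this
  reduction well founded, so only closedness of \<open>\<sigma>\<close> is used, not guardedness.
\<close>

lemma apply_subst_id: "fv t \<inter> dom s = {} \<Longrightarrow> apply_subst t s = t"
proof (induction t arbitrary: s)
  case (Mu x u)
  then have "fv u \<inter> dom (s(x := None)) = {}" by auto
  then show ?case by (simp only: apply_subst.simps Mu.IH)
next
  case (Branch bs)
  then show ?case by (auto intro!: map_idI simp: disjoint_iff) (metis snd_conv)
next
  case (Choice bs)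
  then show ?case by (auto intro!: map_idI simp: disjoint_iff) (metis snd_conv)
qed (auto split: option.split)

lemma apply_subst_closed: "fv t = {} \<Longrightarrow> apply_subst t s = t"
  by (simp add: apply_subst_id)

lemma fv_apply_subst: "y \<in> fv (apply_subst t s) \<Longrightarrow> y \<in> fv t - dom s \<or> (\<exists>v\<in>ran s. y \<in> fv v)"
proof (induction t arbitrary: s)
  case (Mu x u)
  from Mu.prems have y: "y \<in> fv (apply_subst u (s(x := None)))" "y \<noteq> x" by simp_all
  from Mu.IH[OF y(1)] y(2) show ?case by (auto simp: ran_def split: if_splits)
next
  case (Var x)
  then show ?case by (auto simp: ran_def split: option.split_asm)
qed fastforce+

definition closed_subst :: "('b, 'l, 'v) subst \<Rightarrow> bool" where
  "closed_subst s \<longleftrightarrow> (\<forall>v\<in>ran s. fv v = {})"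

lemma closed_subst_upd: "closed_subst s \<Longrightarrow> fv v = {} \<Longrightarrow> closed_subst (s(x \<mapsto> v))"
  by (auto simp: closed_subst_def ran_def)

lemma closed_subst_delete: "closed_subst s \<Longrightarrow> closed_subst (s(x := None))"
  by (auto simp: closed_subst_def ran_def)

lemma fv_apply_closed_subst: "closed_subst s \<Longrightarrow> fv (apply_subst t s) \<subseteq> fv t - dom s"
  using fv_apply_subst[of _ t s] by (auto simp: closed_subst_def)

lemma fv_mclo: "y \<in> fv (mclo t s) \<Longrightarrow> y \<in> fv t \<or> (\<exists>v\<in>ran s. y \<in> fv v)"
proof (induction t arbitrary: s)
  case (Mu x u)
  let ?s' = "s(x \<mapsto> apply_subst (Mu x u) s)"
  from Mu.prems have y: "y \<in> fv (mclo u ?s')" "y \<noteq> x" by simp_all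
  from Mu.IH[OF y(1)] consider "y \<in> fv u" | "y \<in> fv (apply_subst (Mu x u) s)" | "\<exists>v\<in>ran s. y \<in> fv v"
    by (auto simp: ran_def split: if_splits)
  then show ?case
  proof cases
    case 1
    with y(2) show ?thesis by simp
  next
    case 2
    from fv_apply_subst[OF this] show ?thesis by auto
  qed simp
next
  case (OutS m u)
  then show ?case by (auto dest!: fv_apply_subst)
next
  case (InS m u)
  then show ?case by (auto dest!: fv_apply_subst)
next
  case (Branch bs)
  then obtain l u where "(l, u) \<in> set bs" "y \<in> fv (mclo u s)" by auto
  with Branch.IH[of "(l, u)" u s] show ?case by force
next
  case (Choice bs)
  then obtain l u where "(l, u) \<in> set bs" "y \<in> fv (mclo u s)" by auto
  with Choice.IH[of "(l, u)" u s] show ?case by force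
qed auto

lemma apply_subst_apply_subst:
  "closed_subst s1 \<Longrightarrow> apply_subst (apply_subst t s1) s2 = apply_subst t (s2 ++ s1)"
proof (induction t arbitrary: s1 s2)
  case (Mu x u)
  have upd: "(s2 ++ s1)(x := None) = (s2(x := None)) ++ (s1(x := None))"
    by (auto simp: map_add_def split: option.split)
  have "apply_subst (apply_subst u (s1(x := None))) (s2(x := None))
      = apply_subst u ((s2 ++ s1)(x := None))"
    unfolding upd by (rule Mu.IH[OF closed_subst_delete[OF Mu.prems]])
  then show ?case by simp
next
  case (Var x)
  then show ?case
    by (auto simp: map_add_def closed_subst_def ran_def apply_subst_closed split: option.split)
qed auto

inductive_simps step_simps:
  "step End a v" "step (InT b u) a v" "step (OutT b u) a v" "step (OutS m u) a v"
  "step (InS m u) a v" "step (Branch bs) a v" "step (Choice bs) a v" "step (Mu x u) a v"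
  "step (Var x) a v"

lemma step_apply_subst_Mu:
  assumes "closed_subst s"
  shows "step (apply_subst (Mu x u) s) a v \<longleftrightarrow>
    a = Tau \<and> v = apply_subst u (s(x \<mapsto> apply_subst (Mu x u) s))"
proof -
  have "apply_subst (apply_subst u (s(x := None))) [x \<mapsto> apply_subst (Mu x u) s]
      = apply_subst u (s(x \<mapsto> apply_subst (Mu x u) s))"
    by (simp add: apply_subst_apply_subst[OF closed_subst_delete[of s x, OF assms]] map_add_upd_left)
  then show ?thesis by (simp add: step_simps)
qed

definition closes :: "('b, 'l, 'v) subst \<Rightarrow> ('b, 'l, 'v) sterm \<Rightarrow> bool" where
  "closes s t \<longleftrightarrow> closed_subst s \<and> fv t \<subseteq> dom s"

lemma fv_apply_subst_closes: "closes s t \<Longrightarrow> fv (apply_subst t s) = {}"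
  using fv_apply_closed_subst[of s t] by (auto simp: closes_def)

lemma fv_apply_subst_mclo_closes:
  assumes "closes sL t" "closes sR t"
  shows "fv (apply_subst (mclo t sL) sR) = {}"
proof -
  have "fv (mclo t sL) \<subseteq> fv t"
    using assms(1) fv_mclo[of _ t sL] by (auto simp: closes_def closed_subst_def)
  moreover have "fv (apply_subst (mclo t sL) sR) \<subseteq> fv (mclo t sL) - dom sR"
    using assms(2) fv_apply_closed_subst[of sR] by (simp add: closes_def)
  ultimately show ?thesis
    using assms(2) unfolding closes_def by blast
qed

inductive mclo_rel :: "('b, 'l, 'v) sterm \<Rightarrow> ('b, 'l, 'v) sterm \<Rightarrow> bool" where
  mclo_relI: "closes sL t \<Longrightarrow> closes sR t \<Longrightarrow>
    (\<And>y. y \<in> fv t \<Longrightarrow> mclo_rel (the (sL y)) (the (sR y))) \<Longrightarrow>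
    mclo_rel (apply_subst t sL) (apply_subst (mclo t sL) sR)"

lemma mclo_rel_subterm:
  assumes "closes sL t" "closes sR t" "\<And>y. y \<in> fv t \<Longrightarrow> mclo_rel (the (sL y)) (the (sR y))"
    and "fv t' \<subseteq> fv t"
  shows "mclo_rel (apply_subst t' sL) (apply_subst (mclo t' sL) sR)"
  using assms by (intro mclo_relI) (auto simp: closes_def)

definition bisim_clause ::
    "(('b, 'l, 'v) sterm \<Rightarrow> ('b, 'l, 'v) sterm \<Rightarrow> bool) \<Rightarrow> ('b, 'l, 'v) sterm \<Rightarrow> ('b, 'l, 'v) sterm \<Rightarrow> bool" where
  "bisim_clause R s1 s2 \<longleftrightarrow> ((\<exists>s1'. step s1 Tick s1') \<longleftrightarrow> (\<exists>s2'. step s2 Tick s2')) \<and>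
     (\<forall>a s1'. step s1 a s1' \<longrightarrow> (\<exists>s2'. step s2 a s2' \<and> R s1' s2')) \<and>
     (\<forall>a s2'. step s2 a s2' \<longrightarrow> (\<exists>s1'. step s1 a s1' \<and> R s1' s2'))"

lemma is_bisimI: "(\<And>s1 s2. R s1 s2 \<Longrightarrow> bisim_clause R s1 s2) \<Longrightarrow> is_bisim R"
  unfolding is_bisim_def bisim_clause_def by blast

lemma mclo_rel_bisim_clause_Mu:
  assumes closes: "closes sL (Mu x u)" "closes sR (Mu x u)"
    and related: "\<And>y. y \<in> fv (Mu x u) \<Longrightarrow> mclo_rel (the (sL y)) (the (sR y))"
  defines "L \<equiv> apply_subst (Mu x u) sL" and "R \<equiv> apply_subst (mclo (Mu x u) sL) sR"
  shows "bisim_clause mclo_rel L R"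
proof -
  let ?sL = "sL(x \<mapsto> L)" and ?sR = "sR(x \<mapsto> R)"
  have "mclo_rel L R"
    unfolding L_def R_def using closes related by (rule mclo_relI)
  moreover have "closes ?sL u" "closes ?sR u"
    using closes
      closed_subst_upd[OF _ fv_apply_subst_closes[OF closes(1)]]
      closed_subst_upd[OF _ fv_apply_subst_mclo_closes[OF closes]]
    unfolding L_def R_def by (auto simp: closes_def)
  ultimately have "mclo_rel (apply_subst u ?sL) (apply_subst (mclo u ?sL) ?sR)"
    using related by (intro mclo_relI) auto
  moreover have R_Mu: "R = apply_subst (Mu x (mclo u ?sL)) sR"
    unfolding L_def R_def by simp
  have closed: "closed_subst sL" "closed_subst sR"
    using closes by (simp_all add: closes_def)
  have "step L a v \<longleftrightarrow> a = Tau \<and> v = apply_subst u ?sL" for a v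
    unfolding L_def by (rule step_apply_subst_Mu[OF closed(1)])
  moreover have "step R a v \<longleftrightarrow> a = Tau \<and> v = apply_subst (mclo u ?sL) ?sR" for a v
    unfolding R_Mu by (rule step_apply_subst_Mu[OF closed(2)])
  ultimately show ?thesis by (simp add: bisim_clause_def)
qed

lemma mclo_rel_bisim_clause: "mclo_rel L R \<Longrightarrow> bisim_clause mclo_rel L R"
proof (induction rule: mclo_rel.induct)
  case (mclo_relI sL t sR)
  have sub: "\<And>t'. fv t' \<subseteq> fv t \<Longrightarrow> mclo_rel (apply_subst t' sL) (apply_subst (mclo t' sL) sR)"
    using mclo_rel_subterm[OF mclo_relI(1,2)] mclo_relI(3) by blast
  show ?case
  proof (cases t)
    case (Mu x u)
    with mclo_relI(1-3) show ?thesis by (simp only: mclo_rel_bisim_clause_Mu)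
  next
    case (Var x)
    with mclo_relI(1,2,4) show ?thesis by (auto simp: closes_def)
  next
    case End
    then show ?thesis using sub[of End] by (auto simp: bisim_clause_def step_simps)
  next
    case (InT b u)
    then show ?thesis using sub[of u] by (auto simp: bisim_clause_def step_simps)
  next
    case (OutT b u)
    then show ?thesis using sub[of u] by (auto simp: bisim_clause_def step_simps)
  next
    case (OutS m u)
    with mclo_relI(1) have "closes sL m"
      by (auto simp: closes_def)
    then have "apply_subst (apply_subst m sL) sR = apply_subst m sL"
      by (intro apply_subst_closed fv_apply_subst_closes)
    with OutS show ?thesis using sub[of u] by (auto simp: bisim_clause_def step_simps)
  next
    case (InS m u)
    with mclo_relI(1) have "closes sL m"
      by (auto simp: closes_def)
    then have "apply_subst (apply_subst m sL) sR = apply_subst m sL"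
      by (intro apply_subst_closed fv_apply_subst_closes)
    with InS show ?thesis using sub[of u] by (auto simp: bisim_clause_def step_simps)
  next
    case (Branch bs)
    have "\<And>l u. (l, u) \<in> set bs \<Longrightarrow> mclo_rel (apply_subst u sL) (apply_subst (mclo u sL) sR)"
      using Branch by (intro sub) force
    with Branch show ?thesis by (fastforce simp: bisim_clause_def step_simps intro: rev_image_eqI)
  next
    case (Choice bs)
    have "\<And>l u. (l, u) \<in> set bs \<Longrightarrow> mclo_rel (apply_subst u sL) (apply_subst (mclo u sL) sR)"
      "\<And>l u. (l, u) \<in> set bs \<Longrightarrow>
        mclo_rel (apply_subst (Choice [(l, u)]) sL) (apply_subst (mclo (Choice [(l, u)]) sL) sR)"
      using Choice by (intro sub; force)+
    with Choice show ?thesis by (fastforce simp: bisim_clause_def step_simps intro: rev_image_eqI)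
  qed
qed

theorem mainTheorem20:
  fixes \<sigma> :: "('b, 'l, 'v) sterm"
  assumes "\<sigma> \<in> SC"
  shows "\<sigma> \<sim>\<^sub>b mcl \<sigma>"
proof -
  have closed: "fv \<sigma> = {}"
    using assms by (simp add: SC_def)
  then have "closes Map.empty \<sigma>"
    by (simp add: closes_def closed_subst_def)
  then have "mclo_rel (apply_subst \<sigma> Map.empty) (apply_subst (mclo \<sigma> Map.empty) Map.empty)"
    using closed by (intro mclo_relI) auto
  then have "mclo_rel \<sigma> (mcl \<sigma>)"
    by (simp add: apply_subst_id mcl_def)
  moreover have "is_bisim mclo_rel"
    by (rule is_bisimI) (rule mclo_rel_bisim_clause)
  ultimately show ?thesis
    unfolding bisimilar_def by blast
qed

end
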